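(* Let $v\in V$, $e\in E_v$, and let $z\in\mathcal B_v$ be acceptable (i.e. $C_v(z)=z$) with $z(e)<b(e)$. The following are equivalent: (i) $e$ is interesting for $v$ under $z$; (ii) there is an acceptable $\tilde z\in\mathcal B_v$ such that $\tilde z\succ_v z$ and $\tilde z(e)>z(e)$; (iii) $C_v(z+\mathbf 1^e)\ne z$; (iv) $C_v(z+\mathbf 1^e)$ is either (a) $z+\mathbf 1^e$, or (b) $z+\mathbf 1^e-\mathbf 1^{e'}$ for some $e'\in E_v\setminus\{e\}$.
   Context: Let $G=(V,E)$ be a finite bipartite graph and $b\in\mathbb Z_+^E$ capacities. For $v\in V$, $E_v$ is the set of edges at $v$, $\mathcal B_v=\{z\in\mathbb Z_+^{E_v}: z(e)\le b(e)\ \forall e\in E_v\}$, $\mathbf 1^e$ the unit vector of $e$ in $\mathbb Z^{E_v}$, $|z|=\sum_e|z(e)|$, and $\wedge,\vee$ componentwise min and max. $C_v:\mathcal B_v\to\mathcal B_v$ is a choice function with $C_v(z)\le z$ such that for all $z,z'\in\mathcal B_v$: (A1) if $z\ge z'\ge C_v(z)$ then $C_v(z')=C_v(z)$; (A2) if $z\ge z'$ then $C_v(z)\wedge z'\le C_v(z')$; (A3) if $z\ge z'$ then $|C_v(z)|\ge|C_v(z')|$. $z$ is acceptable if $C_v(z)=z$; for distinct acceptable $z,z'$, $z'\prec_v z$ (equivalently $z\succ_v z'$) means $C_v(z\vee z')=z$. An edge $e\in E_v$ is interesting for $v$ under acceptable $z$ if there is $z'\in\mathcal B_v$ with $z'(e)>z(e)$,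 $z'(e')=z(e')$ for all $e'\ne e$, and $C_v(z')(e)>z(e)$. *)

theory Defs
  imports Main "HOL-Library.Function_Algebras"
begin

text \<open>Local setting at a vertex v: Ev is the (finite) set of edges at v,
  b the capacities. Vectors in Z_+^{E_v} are functions 'e => int that are
  nonnegative on Ev and zero outside Ev.\<close>

definition Bv :: "'e set \<Rightarrow> ('e \<Rightarrow> int) \<Rightarrow> ('e \<Rightarrow> int) set" where
  "Bv Ev b = {z. (\<forall>x. x \<notin> Ev \<longrightarrow> z x = 0) \<and> (\<forall>x\<in>Ev. 0 \<le> z x \<and> z x \<le> b x)}"

definition vnorm :: "'e set \<Rightarrow> ('e \<Rightarrow> int) \<Rightarrow> int" where
  "vnorm Ev z = (\<Sum>x\<in>Ev. \<bar>z x\<bar>)"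

definition vmin :: "('e \<Rightarrow> int) \<Rightarrow> ('e \<Rightarrow> int) \<Rightarrow> ('e \<Rightarrow> int)" where
  "vmin z z' = (\<lambda>x. min (z x) (z' x))"

definition vmax :: "('e \<Rightarrow> int) \<Rightarrow> ('e \<Rightarrow> int) \<Rightarrow> ('e \<Rightarrow> int)" where
  "vmax z z' = (\<lambda>x. max (z x) (z' x))"

definition unitv :: "'e \<Rightarrow> ('e \<Rightarrow> int)" where
  "unitv e = (\<lambda>x. if x = e then 1 else 0)"

definition choice_fn :: "'e set \<Rightarrow> ('e \<Rightarrow> int) \<Rightarrow> (('e \<Rightarrow> int) \<Rightarrow> ('e \<Rightarrow> int)) \<Rightarrow> bool" where
  "choice_fn Ev b C \<longleftrightarrow>
     (\<forall>z\<in>Bv Ev b. C z \<in> Bv Ev b \<and> C z \<le> z) \<and>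
     (\<forall>z\<in>Bv Ev b. \<forall>z'\<in>Bv Ev b. z \<ge> z' \<and> z' \<ge> C z \<longrightarrow> C z' = C z) \<and>
     (\<forall>z\<in>Bv Ev b. \<forall>z'\<in>Bv Ev b. z \<ge> z' \<longrightarrow> vmin (C z) z' \<le> C z') \<and>
     (\<forall>z\<in>Bv Ev b. \<forall>z'\<in>Bv Ev b. z \<ge> z' \<longrightarrow> vnorm Ev (C z) \<ge> vnorm Ev (C z'))"

definition acceptable :: "(('e \<Rightarrow> int) \<Rightarrow> ('e \<Rightarrow> int)) \<Rightarrow> ('e \<Rightarrow> int) \<Rightarrow> bool" where
  "acceptable C z \<longleftrightarrow> C z = z"

definition prefers :: "(('e \<Rightarrow> int) \<Rightarrow> ('e \<Rightarrow> int)) \<Rightarrow> ('e \<Rightarrow> int) \<Rightarrow> ('e \<Rightarrow> int) \<Rightarrow> bool" where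
  "prefers C z z' \<longleftrightarrow> acceptable C z \<and> acceptable C z' \<and> z \<noteq> z' \<and> C (vmax z z') = z"

definition interesting :: "'e set \<Rightarrow> ('e \<Rightarrow> int) \<Rightarrow> (('e \<Rightarrow> int) \<Rightarrow> ('e \<Rightarrow> int)) \<Rightarrow> ('e \<Rightarrow> int) \<Rightarrow> 'e \<Rightarrow> bool" where
  "interesting Ev b C z e \<longleftrightarrow>
     (\<exists>z'\<in>Bv Ev b. z' e > z e \<and> (\<forall>e'\<in>Ev. e' \<noteq> e \<longrightarrow> z' e' = z e') \<and> C z' e > z e)"

end

theory Submission
  imports Defs
begin

text \<open>Everything is decided by whether the contract added in \<open>w = z + \<one>\<^sup>e\<close> is
  chosen, i.e. whether \<open>C w e = w e\<close>. If it is not, then \<open>z \<le> w\<close> and \<open>C w \<le> z\<close>, so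
  irrelevance of rejected contracts (A1) forces \<open>C w = C z = z\<close>. Substitutability (A2)
  propagates "\<open>e\<close> is chosen at \<open>z e + 1\<close>" downwards from any larger vector, which
  handles interesting edges and the join \<open>zt \<squnion> z\<close> of a preferred \<open>zt\<close>; conversely
  \<open>C w\<close> itself is preferred to \<open>z\<close>. Finally the law of aggregate demand (A3) gives
  \<open>|C w| \<ge> |z| = |w| - 1\<close>, so \<open>C w\<close> rejects at most one unit of \<open>w\<close>.\<close>

lemma choice_in_Bv: "choice_fn Ev b C \<Longrightarrow> y \<in> Bv Ev b \<Longrightarrow> C y \<in> Bv Ev b"
  unfolding choice_fn_def by blast

lemma choice_le: "choice_fn Ev b C \<Longrightarrow> y \<in> Bv Ev b \<Longrightarrow> C y \<le> y"
  unfolding choice_fn_def by blast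

lemma choice_irrelevance:
  "choice_fn Ev b C \<Longrightarrow> y \<in> Bv Ev b \<Longrightarrow> y' \<in> Bv Ev b \<Longrightarrow> y' \<le> y \<Longrightarrow> C y \<le> y'
    \<Longrightarrow> C y' = C y"
  unfolding choice_fn_def by blast

lemma choice_substitutes:
  "choice_fn Ev b C \<Longrightarrow> y \<in> Bv Ev b \<Longrightarrow> y' \<in> Bv Ev b \<Longrightarrow> y' \<le> y \<Longrightarrow> vmin (C y) y' \<le> C y'"
  unfolding choice_fn_def by blast

lemma choice_size_mono:
  "choice_fn Ev b C \<Longrightarrow> y \<in> Bv Ev b \<Longrightarrow> y' \<in> Bv Ev b \<Longrightarrow> y' \<le> y
    \<Longrightarrow> vnorm Ev (C y') \<le> vnorm Ev (C y)"
  unfolding choice_fn_def by blast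

lemma acceptable_choice: "choice_fn Ev b C \<Longrightarrow> y \<in> Bv Ev b \<Longrightarrow> acceptable C (C y)"
  unfolding acceptable_def by (rule choice_irrelevance) (auto intro: choice_in_Bv choice_le)

lemma choice_keeps_chosen_coord:
  assumes "choice_fn Ev b C" "y \<in> Bv Ev b" "y' \<in> Bv Ev b" "y' \<le> y" "y' x \<le> C y x"
  shows "C y' x = y' x"
proof -
  have "min (C y x) (y' x) \<le> C y' x"
    using choice_substitutes[OF assms(1-4)] by (simp add: le_fun_def vmin_def)
  moreover have "C y' x \<le> y' x"
    using choice_le[OF assms(1,3)] by (simp add: le_fun_def)
  ultimately show ?thesis using assms(5) by linarith
qed

lemma vmax_in_Bv: "y \<in> Bv Ev b \<Longrightarrow> y' \<in> Bv Ev b \<Longrightarrow> vmax y y' \<in> Bv Ev b"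
  by (auto simp: Bv_def vmax_def)

lemma prefers_choice:
  assumes C: "choice_fn Ev b C" and y: "y \<in> Bv Ev b" and z: "z \<in> Bv Ev b"
    and "acceptable C z" "z \<le> y" "C y \<noteq> z"
  shows "prefers C (C y) z"
proof -
  have "vmax (C y) z \<le> y" "C y \<le> vmax (C y) z"
    using choice_le[OF C y] \<open>z \<le> y\<close> by (auto simp: le_fun_def vmax_def)
  then have "C (vmax (C y) z) = C y"
    using choice_irrelevance[OF C y vmax_in_Bv[OF choice_in_Bv[OF C y] z]] by blast
  then show ?thesis
    using assms acceptable_choice[OF C y] by (simp add: prefers_def)
qed

lemma vnorm_Bv: "y \<in> Bv Ev b \<Longrightarrow> vnorm Ev y = sum y Ev"
  by (auto simp: vnorm_def Bv_def intro: sum.cong)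

lemma add_unitv_in_Bv: "z \<in> Bv Ev b \<Longrightarrow> e \<in> Ev \<Longrightarrow> z e < b e \<Longrightarrow> z + unitv e \<in> Bv Ev b"
  by (auto simp: Bv_def unitv_def)

lemma le_add_unitv: "z \<le> z + unitv e"
  by (simp add: le_fun_def unitv_def)

lemma sum_add_unitv: "finite A \<Longrightarrow> a \<in> A \<Longrightarrow> sum (z + unitv a) A = sum z A + 1"
  by (simp add: sum.distrib unitv_def)

lemma nonneg_sum_le_one_cases:
  fixes d :: "'a \<Rightarrow> int"
  assumes A: "finite A" and out: "\<And>x. x \<notin> A \<Longrightarrow> d x = 0"
    and nonneg: "\<And>x. 0 \<le> d x" and sum: "sum d A \<le> 1"
  shows "d = 0 \<or> (\<exists>a\<in>A. d = unitv a)"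
proof (cases "d = 0")
  case False
  then obtain a where "d a \<noteq> 0" by (auto simp: fun_eq_iff)
  with out nonneg[of a] have a: "a \<in> A" and pos: "1 \<le> d a" by force+
  have "d x = 0" if "x \<noteq> a" for x
  proof (cases "x \<in> A")
    case True
    have "d a + d x = sum d {a, x}" using that by simp
    also have "\<dots> \<le> sum d A"
      using A a True nonneg by (intro sum_mono2) auto
    finally show ?thesis using pos sum nonneg[of x] by linarith
  qed (use out in auto)
  moreover have "d a \<le> sum d A"
    using A a nonneg by (intro member_le_sum) auto
  then have "d a = 1" using pos sum by linarith
  ultimately have "d = unitv a" by (auto simp: unitv_def)
  with a show ?thesis by blast
qed simp

context
  fixes Ev :: "'e set" and b :: "'e \<Rightarrow> int" and C :: "('e \<Rightarrow> int) \<Rightarrow> ('e \<Rightarrow> int)"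
    and z :: "'e \<Rightarrow> int" and e :: 'e
  assumes C: "choice_fn Ev b C" and e: "e \<in> Ev" and z: "z \<in> Bv Ev b"
    and z_acceptable: "acceptable C z" and z_lt: "z e < b e"
begin

private lemma z_add_unitv_in_Bv: "z + unitv e \<in> Bv Ev b"
  using add_unitv_in_Bv[OF z e z_lt] .

lemma choice_add_unitv_neq_iff:
  "C (z + unitv e) \<noteq> z \<longleftrightarrow> C (z + unitv e) e = z e + 1"
proof
  let ?w = "z + unitv e"
  have le: "C ?w x \<le> ?w x" for x
    using choice_le[OF C z_add_unitv_in_Bv] by (simp add: le_fun_def)
  assume "C ?w \<noteq> z"
  show "C ?w e = z e + 1"
  proof (rule ccontr)
    assume "C ?w e \<noteq> z e + 1"
    then have "C ?w x \<le> z x" for x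
      using le[of x] by (cases "x = e") (auto simp: unitv_def)
    then have "C ?w \<le> z" by (simp add: le_fun_def)
    then have "C z = C ?w" using choice_irrelevance[OF C z_add_unitv_in_Bv z le_add_unitv] by blast
    with \<open>C ?w \<noteq> z\<close> z_acceptable show False by (simp add: acceptable_def)
  qed
qed auto

lemma choice_add_unitv_if_above:
  assumes "y \<in> Bv Ev b" "z + unitv e \<le> y" "z e < C y e"
  shows "C (z + unitv e) e = z e + 1"
  using choice_keeps_chosen_coord[OF C assms(1) z_add_unitv_in_Bv assms(2)] assms(3)
  by (simp add: unitv_def)

lemma interesting_iff_choice_add_unitv:
  "interesting Ev b C z e \<longleftrightarrow> C (z + unitv e) e = z e + 1"
proof
  assume "interesting Ev b C z e"
  then obtain y where y: "y \<in> Bv Ev b" "z e < y e" "\<forall>x\<in>Ev. x \<noteq> e \<longrightarrow> y x = z x"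
    and "z e < C y e"
    unfolding interesting_def by blast
  moreover have "z + unitv e \<le> y"
    using y z by (auto simp: le_fun_def unitv_def Bv_def)
  ultimately show "C (z + unitv e) e = z e + 1"
    using choice_add_unitv_if_above by blast
next
  assume "C (z + unitv e) e = z e + 1"
  then show "interesting Ev b C z e"
    unfolding interesting_def using z_add_unitv_in_Bv by (intro bexI[of _ "z + unitv e"]) (auto simp: unitv_def)
qed

lemma preferred_raise_iff_choice_add_unitv:
  "(\<exists>zt\<in>Bv Ev b. acceptable C zt \<and> prefers C zt z \<and> zt e > z e)
    \<longleftrightarrow> C (z + unitv e) e = z e + 1"
proof
  assume "\<exists>zt\<in>Bv Ev b. acceptable C zt \<and> prefers C zt z \<and> zt e > z e"
  then obtain zt where zt: "zt \<in> Bv Ev b" "prefers C zt z" "z e < zt e" by blast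
  then have "C (vmax zt z) = zt" by (simp add: prefers_def)
  moreover have "z + unitv e \<le> vmax zt z"
    using zt by (auto simp: le_fun_def vmax_def unitv_def)
  ultimately show "C (z + unitv e) e = z e + 1"
    using choice_add_unitv_if_above[OF vmax_in_Bv[OF zt(1) z]] zt by simp
next
  assume chosen: "C (z + unitv e) e = z e + 1"
  then have "prefers C (C (z + unitv e)) z"
    using prefers_choice[OF C z_add_unitv_in_Bv z z_acceptable le_add_unitv] choice_add_unitv_neq_iff by blast
  with chosen show "\<exists>zt\<in>Bv Ev b. acceptable C zt \<and> prefers C zt z \<and> zt e > z e"
    using choice_in_Bv[OF C z_add_unitv_in_Bv] acceptable_choice[OF C z_add_unitv_in_Bv] by auto
qed

lemma choice_add_unitv_shape_iff:
  assumes "finite Ev"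
  shows "(C (z + unitv e) = z + unitv e
          \<or> (\<exists>e'\<in>Ev - {e}. C (z + unitv e) = z + unitv e - unitv e'))
    \<longleftrightarrow> C (z + unitv e) e = z e + 1"
proof
  assume "C (z + unitv e) = z + unitv e
          \<or> (\<exists>e'\<in>Ev - {e}. C (z + unitv e) = z + unitv e - unitv e')"
  then show "C (z + unitv e) e = z e + 1"
  proof (elim disjE bexE)
    fix e' assume "e' \<in> Ev - {e}" "C (z + unitv e) = z + unitv e - unitv e'"
    then show ?thesis by (auto simp: unitv_def)
  qed (simp add: unitv_def)
next
  let ?w = "z + unitv e"
  define d where "d = ?w - C ?w"
  assume chosen: "C ?w e = z e + 1"
  have Cw: "C ?w \<in> Bv Ev b" "C ?w \<le> ?w"
    using choice_in_Bv[OF C z_add_unitv_in_Bv] choice_le[OF C z_add_unitv_in_Bv] .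
  have "sum z Ev = vnorm Ev (C z)"
    using z z_acceptable by (simp add: vnorm_Bv acceptable_def)
  also have "\<dots> \<le> vnorm Ev (C ?w)"
    using choice_size_mono[OF C z_add_unitv_in_Bv z le_add_unitv] .
  also have "\<dots> = sum (C ?w) Ev"
    using vnorm_Bv[OF Cw(1)] .
  finally have "sum d Ev \<le> 1"
    using sum_add_unitv[OF assms e, of z] by (simp add: d_def sum_subtractf)
  moreover have "d x = 0" if "x \<notin> Ev" for x
    using that Cw(1) z e by (auto simp: d_def Bv_def unitv_def)
  moreover have "0 \<le> d x" for x
    using Cw(2) by (simp add: d_def le_fun_def)
  ultimately have "d = 0 \<or> (\<exists>e'\<in>Ev. d = unitv e')"
    using nonneg_sum_le_one_cases[OF assms] by blast
  moreover have "d \<noteq> unitv e"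
    using chosen by (auto simp: d_def unitv_def dest: fun_cong[of _ _ e])
  moreover have "C ?w = ?w - d" by (simp add: d_def)
  ultimately show "C ?w = ?w \<or> (\<exists>e'\<in>Ev - {e}. C ?w = ?w - unitv e')"
    by auto
qed

end

theorem lemma3p1:
  fixes Ev :: "'e set" and b :: "'e \<Rightarrow> int" and C :: "('e \<Rightarrow> int) \<Rightarrow> ('e \<Rightarrow> int)"
    and z :: "'e \<Rightarrow> int" and e :: 'e
  assumes "finite Ev"
    and "\<forall>x\<in>Ev. 0 \<le> b x"
    and "choice_fn Ev b C"
    and "e \<in> Ev"
    and "z \<in> Bv Ev b"
    and "acceptable C z"
    and "z e < b e"
  shows "(interesting Ev b C z e \<longleftrightarrow>
           (\<exists>zt\<in>Bv Ev b. acceptable C zt \<and> prefers C zt z \<and> zt e > z e))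
       \<and> ((\<exists>zt\<in>Bv Ev b. acceptable C zt \<and> prefers C zt z \<and> zt e > z e) \<longleftrightarrow>
           C (z + unitv e) \<noteq> z)
       \<and> (C (z + unitv e) \<noteq> z \<longleftrightarrow>
           (C (z + unitv e) = z + unitv e \<or>
            (\<exists>e'\<in>Ev - {e}. C (z + unitv e) = z + unitv e - unitv e')))"
  using interesting_iff_choice_add_unitv[OF assms(3-7)]
    preferred_raise_iff_choice_add_unitv[OF assms(3-7)]
    choice_add_unitv_neq_iff[OF assms(3-7)]
    choice_add_unitv_shape_iff[OF assms(3-7,1)]
  by simp

end
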